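(* Let $T$ be a tournament and $x\in\mathrm{SA}_1(T)$. If $x_v<3/7$ for all $v\in V(T)$, then $T$ is light.
   Context: A triangle of a tournament $T$ is a set $\{a,b,c\}\subseteq V(T)$ inducing a directed 3-cycle. An unordered pair $ab$ of vertices is a diagonal if there exist vertices $u,v$ with $\{u,v,a\}$ and $\{u,v,b\}$ both triangles. A triangle is heavy if at least two of its three pairs of vertices are diagonals. A tournament is heavy if it has a heavy triangle, and light otherwise. $E(T)$ is the set of unordered pairs of distinct vertices. $\mathrm{SA}_1(T)$ is the set of $x\in\mathbb{R}^{V(T)}$ for which there exists $(x_{ab})_{ab\in E(T)}$ such that: for every triangle $\{a,b,c\}$ (any labelling) and every $d\in V(T)\setminus\{a,b,c\}$, (1) $x_a+x_b+x_c\ge 1+x_{ab}+x_{bc}$, (2) $x_{ad}+x_{bd}+x_{cd}\ge x_d$, (3) $x_a+x_b+x_c+x_d\ge 1+x_{ad}+x_{bd}+x_{cd}$; and for all distinct $a,b$, (4) $1\ge x_a\ge x_{ab}\ge 0$. *)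

theory Defs
  imports Main "HOL.Real"
begin

definition tournament :: "'a set \<Rightarrow> ('a \<Rightarrow> 'a \<Rightarrow> bool) \<Rightarrow> bool" where
  "tournament V A \<longleftrightarrow> finite V \<and> (\<forall>v\<in>V. \<not> A v v) \<and>
     (\<forall>u\<in>V. \<forall>v\<in>V. u \<noteq> v \<longrightarrow> (A u v \<longleftrightarrow> \<not> A v u))"

definition is_triangle :: "'a set \<Rightarrow> ('a \<Rightarrow> 'a \<Rightarrow> bool) \<Rightarrow> 'a set \<Rightarrow> bool" where
  "is_triangle V A S \<longleftrightarrow> S \<subseteq> V \<and>
     (\<exists>a b c. S = {a, b, c} \<and> a \<noteq> b \<and> b \<noteq> c \<and> a \<noteq> c \<and> A a b \<and> A b c \<and> A c a)"

definition is_diagonal :: "'a set \<Rightarrow> ('a \<Rightarrow> 'a \<Rightarrow> bool) \<Rightarrow> 'a \<Rightarrow> 'a \<Rightarrow> bool" where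
  "is_diagonal V A a b \<longleftrightarrow> a \<in> V \<and> b \<in> V \<and> a \<noteq> b \<and>
     (\<exists>u v. is_triangle V A {u, v, a} \<and> is_triangle V A {u, v, b})"

definition heavy_triangle :: "'a set \<Rightarrow> ('a \<Rightarrow> 'a \<Rightarrow> bool) \<Rightarrow> 'a set \<Rightarrow> bool" where
  "heavy_triangle V A S \<longleftrightarrow> is_triangle V A S \<and>
     (\<exists>a b c. S = {a, b, c} \<and> a \<noteq> b \<and> b \<noteq> c \<and> a \<noteq> c \<and>
        is_diagonal V A a b \<and> is_diagonal V A b c)"

definition heavy :: "'a set \<Rightarrow> ('a \<Rightarrow> 'a \<Rightarrow> bool) \<Rightarrow> bool" where
  "heavy V A \<longleftrightarrow> (\<exists>S. heavy_triangle V A S)"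

definition light :: "'a set \<Rightarrow> ('a \<Rightarrow> 'a \<Rightarrow> bool) \<Rightarrow> bool" where
  "light V A \<longleftrightarrow> \<not> heavy V A"

text \<open>SA_1(T). The pair variables x_ab are indexed by the unordered pair {a,b}.
Only the values of x on V matter.\<close>
definition SA1 :: "'a set \<Rightarrow> ('a \<Rightarrow> 'a \<Rightarrow> bool) \<Rightarrow> ('a \<Rightarrow> real) set" where
  "SA1 V A = {x. \<exists>y :: 'a set \<Rightarrow> real.
     (\<forall>a b c. a \<noteq> b \<and> b \<noteq> c \<and> a \<noteq> c \<and> is_triangle V A {a, b, c} \<longrightarrow>
        x a + x b + x c \<ge> 1 + y {a, b} + y {b, c} \<and>
        (\<forall>d \<in> V - {a, b, c}.
           y {a, d} + y {b, d} + y {c, d} \<ge> x d \<and>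
           x a + x b + x c + x d \<ge> 1 + y {a, d} + y {b, d} + y {c, d})) \<and>
     (\<forall>a\<in>V. \<forall>b\<in>V. a \<noteq> b \<longrightarrow> 1 \<ge> x a \<and> x a \<ge> y {a, b} \<and> y {a, b} \<ge> 0)}"

end

theory Submission
  imports Defs
begin

text \<open>For a diagonal pq witnessed by triangles uvp and uvq, summing constraint (1) for both
  triangles against constraint (2) for p outside uvq and q outside uvp cancels every pair
  variable except y{p,q}, giving y{p,q} \<ge> 1 - x u - x v. If all x v < c this exceeds 1 - 2c,
  so constraint (1) on a heavy triangle forces 3c > 1 + 2(1 - 2c), i.e. c > 3/7.\<close>

definition SA1_certificate ::
  "'a set \<Rightarrow> ('a \<Rightarrow> 'a \<Rightarrow> bool) \<Rightarrow> ('a \<Rightarrow> real) \<Rightarrow> ('a set \<Rightarrow> real) \<Rightarrow> bool" where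
  "SA1_certificate V A x y \<longleftrightarrow>
     (\<forall>a b c. a \<noteq> b \<and> b \<noteq> c \<and> a \<noteq> c \<and> is_triangle V A {a, b, c} \<longrightarrow>
        x a + x b + x c \<ge> 1 + y {a, b} + y {b, c} \<and>
        (\<forall>d \<in> V - {a, b, c}.
           y {a, d} + y {b, d} + y {c, d} \<ge> x d \<and>
           x a + x b + x c + x d \<ge> 1 + y {a, d} + y {b, d} + y {c, d})) \<and>
     (\<forall>a\<in>V. \<forall>b\<in>V. a \<noteq> b \<longrightarrow> 1 \<ge> x a \<and> x a \<ge> y {a, b} \<and> y {a, b} \<ge> 0)"

lemma SA1_iff_certificate: "x \<in> SA1 V A \<longleftrightarrow> (\<exists>y. SA1_certificate V A x y)"
  by (simp add: SA1_def SA1_certificate_def)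

lemma is_triangle_distinct:
  assumes "is_triangle V A {p, q, r}"
  shows "p \<noteq> q \<and> q \<noteq> r \<and> p \<noteq> r \<and> p \<in> V \<and> q \<in> V \<and> r \<in> V"
proof -
  obtain a b c where S: "{p, q, r} = {a, b, c}" "a \<noteq> b" "b \<noteq> c" "a \<noteq> c" "{p, q, r} \<subseteq> V"
    using assms unfolding is_triangle_def by blast
  then have "card {p, q, r} = 3" by simp
  with S(5) show ?thesis by (auto simp: card_insert_if split: if_splits)
qed

lemma is_triangle_swap_last:
  "is_triangle V A {a, b, c} \<Longrightarrow> is_triangle V A {a, c, b}"
  by (simp add: insert_commute)

lemma SA1_certificate_triangle:
  assumes "SA1_certificate V A x y" and "is_triangle V A {a, b, c}"
  shows "x a + x b + x c \<ge> 1 + y {a, b} + y {b, c}"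
  using assms is_triangle_distinct[OF assms(2)] unfolding SA1_certificate_def by blast

lemma SA1_certificate_outside:
  assumes "SA1_certificate V A x y" and "is_triangle V A {a, b, c}" and "d \<in> V - {a, b, c}"
  shows "y {a, d} + y {b, d} + y {c, d} \<ge> x d"
  using assms is_triangle_distinct[OF assms(2)] unfolding SA1_certificate_def by blast

lemma SA1_certificate_diagonal_bound:
  assumes cert: "SA1_certificate V A x y"
    and up: "is_triangle V A {u, v, p}" and uq: "is_triangle V A {u, v, q}"
    and "p \<in> V" "q \<in> V" "p \<noteq> q"
  shows "y {p, q} \<ge> 1 - x u - x v"
proof -
  note dp = is_triangle_distinct[OF up] and dq = is_triangle_distinct[OF uq]
  have "x u + x p + x v \<ge> 1 + y {u, p} + y {p, v}"
    using SA1_certificate_triangle[OF cert is_triangle_swap_last[OF up]] .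
  moreover have "x u + x q + x v \<ge> 1 + y {u, q} + y {q, v}"
    using SA1_certificate_triangle[OF cert is_triangle_swap_last[OF uq]] .
  moreover have "y {u, q} + y {v, q} + y {p, q} \<ge> x q"
    using SA1_certificate_outside[OF cert up] assms dq by auto
  moreover have "y {u, p} + y {v, p} + y {q, p} \<ge> x p"
    using SA1_certificate_outside[OF cert uq] assms dp by auto
  moreover have "{q, p} = {p, q}" "{p, v} = {v, p}" "{q, v} = {v, q}" by blast+
  ultimately show ?thesis by simp
qed

lemma SA1_certificate_diagonal_gt:
  assumes cert: "SA1_certificate V A x y"
    and small: "\<forall>v\<in>V. x v < c" and diag: "is_diagonal V A p q"
  shows "y {p, q} > 1 - 2 * c"
proof -
  obtain u v where "p \<in> V" "q \<in> V" "p \<noteq> q"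
    and up: "is_triangle V A {u, v, p}" and uq: "is_triangle V A {u, v, q}"
    using diag unfolding is_diagonal_def by blast
  then have "y {p, q} \<ge> 1 - x u - x v"
    using SA1_certificate_diagonal_bound[OF cert] by blast
  moreover have "x u < c" "x v < c"
    using small is_triangle_distinct[OF up] by auto
  ultimately show ?thesis by linarith
qed

theorem lemma1:
  fixes V :: "'a set" and A :: "'a \<Rightarrow> 'a \<Rightarrow> bool" and x :: "'a \<Rightarrow> real"
  assumes "tournament V A"
    and "x \<in> SA1 V A"
    and "\<forall>v\<in>V. x v < 3 / 7"
  shows "light V A"
  unfolding light_def heavy_def heavy_triangle_def
proof
  obtain y where cert: "SA1_certificate V A x y"
    using assms(2) SA1_iff_certificate by blast
  assume "\<exists>S. is_triangle V A S \<and> (\<exists>a b c. S = {a, b, c} \<and> a \<noteq> b \<and> b \<noteq> c \<and> a \<noteq> c \<and>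
      is_diagonal V A a b \<and> is_diagonal V A b c)"
  then obtain a b c where t: "is_triangle V A {a, b, c}"
    and ab: "is_diagonal V A a b" and bc: "is_diagonal V A b c" by blast
  have "x a + x b + x c \<ge> 1 + y {a, b} + y {b, c}"
    using SA1_certificate_triangle[OF cert t] .
  moreover have "y {a, b} > 1/7" "y {b, c} > 1/7"
    using SA1_certificate_diagonal_gt[OF cert assms(3)] ab bc by simp_all
  moreover have "x a < 3/7" "x b < 3/7" "x c < 3/7"
    using assms(3) is_triangle_distinct[OF t] by auto
  ultimately show False by linarith
qed

end
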